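(* Let $\Lambda$ be a finite, strongly connected $k$-graph with no sources, and let $p$ be a probability measure on $\Lambda^\infty$ such that (a) the standard prefixing maps $\sigma_\lambda$ ($\lambda\in\Lambda$) and coding maps $\sigma^n$ ($n\in\mathbb N^k$) are measurable; (b) $p(Z(v))>0$ for every $v\in\Lambda^0$; (c) for every edge $\lambda$ (i.e. $\lambda\in\Lambda^{e_i}$ for some $i$), $p\circ\sigma_\lambda\ll p$ on $Z(s(\lambda))$ and the Radon–Nikodym derivative $\Phi_{\sigma_\lambda}=d(p\circ\sigma_\lambda)/dp$ is strictly positive $p$-a.e. on $Z(s(\lambda))$. Then the sets $D_\lambda=Z(s(\lambda))$, the maps $\sigma_\lambda$ and the maps $\sigma^n$ form a $\Lambda$-semibranching function system on $(\Lambda^\infty,p)$.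
   Context: $k$-graph: countable small category $\Lambda$ with degree functor $d:\Lambda\to\mathbb N^k$ with unique factorization; vertices $\Lambda^0$, range/source $r,s$; finite (each $\Lambda^n$ finite), no sources, strongly connected ($v\Lambda w\neq\emptyset$ for all vertices). $\Lambda^\infty$: infinite paths, i.e. degree-preserving functors $x:\Omega_k\to\Lambda$ ($\Omega_k$: morphisms $(p,q)$, $p\le q$ in $\mathbb N^k$, $d(p,q)=q-p$), $r(x)=x(0,0)$; cylinder sets $Z(\lambda)=\{x:x(0,d(\lambda))=\lambda\}$ form a compact open basis, with associated Borel $\sigma$-algebra. Standard coding maps: $\sigma^m(x)(p,q)=x(p+m,q+m)$. Standard prefixing maps: $\sigma_\lambda:Z(s(\lambda))\to Z(\lambda)$, $\sigma_\lambda(x)=\lambda x$, the unique infinite path with $(\lambda x)(0,d(\lambda))=\lambda$ and $\sigma^{d(\lambda)}(\lambda x)=x$. A semibranching function system on $(X,\mu)$ is a finite family of measurable maps $\tau_i:D_i\to X$, $R_i=\tau_i(D_i)$, with $\mu(X\setminus\bigcup R_i)=0$, $\mu(R_i\cap R_j)=0$ ($i\ne j$), and $d(\mu\circ\tau_i)/d\mu>0$ a.e. on $D_i$; $\tau$ is a coding map if $\tau\circ\tau_i=\mathrm{id}_{D_i}$. A $\Lambda$-semibranching function system on $(X,\mu)$: sets $D_\lambda$, prefixing maps $\tau_\lambda:D_\lambda\to X$, coding maps $\tau^m$ with (a) each $\{\tau_\lambda\}_{\lambda\in\Lambda^m}$ a semibranching function system with coding map $\tau^m$; (b) $\tau_v=\mathrm{id}$,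 $\mu(D_v)>0$; (c) $R_\nu\subseteq D_\lambda$ a.e. and $\tau_\lambda\tau_\nu=\tau_{\lambda\nu}$ a.e. for $\nu\in s(\lambda)\Lambda$; (d) $\tau^m\tau^n=\tau^{m+n}$. *)

theory Defs
  imports "HOL-Probability.Probability_Measure"
begin

text \<open>A k-graph is given by a set of morphisms, range and source maps, a (partial)
composition, and a degree functor into N^k, where N^k is represented as
functions 'k => nat for a finite type 'k with k = CARD('k) elements.
Objects are identified with identity morphisms (the vertices).
Composition convention: cmp l n is defined when src l = rng n.\<close>

record ('a, 'k) kgraph =
  mor :: "'a set"
  rng :: "'a \<Rightarrow> 'a"
  src :: "'a \<Rightarrow> 'a"
  cmp :: "'a \<Rightarrow> 'a \<Rightarrow> 'a"
  deg :: "'a \<Rightarrow> ('k \<Rightarrow> nat)"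

definition is_kgraph :: "('a, 'k::finite) kgraph \<Rightarrow> bool" where
  "is_kgraph G \<longleftrightarrow>
     countable (mor G) \<and>
     (\<forall>l\<in>mor G. rng G l \<in> mor G \<and> src G l \<in> mor G) \<and>
     (\<forall>l\<in>mor G. rng G (rng G l) = rng G l \<and> src G (rng G l) = rng G l \<and>
                 rng G (src G l) = src G l \<and> src G (src G l) = src G l) \<and>
     (\<forall>l\<in>mor G. cmp G (rng G l) l = l \<and> cmp G l (src G l) = l) \<and>
     (\<forall>l\<in>mor G. \<forall>n\<in>mor G. src G l = rng G n \<longrightarrow>
         cmp G l n \<in> mor G \<and> rng G (cmp G l n) = rng G l \<and> src G (cmp G l n) = src G n \<and>
         deg G (cmp G l n) = (\<lambda>i. deg G l i + deg G n i)) \<and>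
     (\<forall>l\<in>mor G. \<forall>n\<in>mor G. \<forall>q\<in>mor G. src G l = rng G n \<longrightarrow> src G n = rng G q \<longrightarrow>
         cmp G (cmp G l n) q = cmp G l (cmp G n q)) \<and>
     (\<forall>l\<in>mor G. \<forall>m n. deg G l = (\<lambda>i. m i + n i) \<longrightarrow>
         (\<exists>!(a, b). a \<in> mor G \<and> b \<in> mor G \<and> src G a = rng G b \<and>
                    deg G a = m \<and> deg G b = n \<and> cmp G a b = l))"

definition vertices :: "('a, 'k) kgraph \<Rightarrow> 'a set" where
  "vertices G = {v \<in> mor G. rng G v = v}"

definition paths_of_deg :: "('a, 'k) kgraph \<Rightarrow> ('k \<Rightarrow> nat) \<Rightarrow> 'a set" where
  "paths_of_deg G n = {l \<in> mor G. deg G l = n}"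

definition finite_kgraph :: "('a, 'k) kgraph \<Rightarrow> bool" where
  "finite_kgraph G \<longleftrightarrow> (\<forall>n. finite (paths_of_deg G n))"

definition no_sources :: "('a, 'k) kgraph \<Rightarrow> bool" where
  "no_sources G \<longleftrightarrow> (\<forall>v\<in>vertices G. \<forall>n. \<exists>l\<in>paths_of_deg G n. rng G l = v)"

definition strongly_connected :: "('a, 'k) kgraph \<Rightarrow> bool" where
  "strongly_connected G \<longleftrightarrow>
     (\<forall>v\<in>vertices G. \<forall>w\<in>vertices G. \<exists>l\<in>mor G. rng G l = v \<and> src G l = w)"

definition basis_deg :: "'k \<Rightarrow> ('k \<Rightarrow> nat)" where
  "basis_deg i = (\<lambda>j. if j = i then 1 else 0)"

definition edges :: "('a, 'k) kgraph \<Rightarrow> 'a set" where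
  "edges G = (\<Union>i. paths_of_deg G (basis_deg i))"

text \<open>An infinite path is a degree-preserving functor from Omega_k; the morphism
(p,q) with p <= q is sent to x p q. Outside p <= q the value is fixed to undefined
so that infinite paths are uniquely represented.\<close>

type_synonym ('a, 'k) ipath = "('k \<Rightarrow> nat) \<Rightarrow> ('k \<Rightarrow> nat) \<Rightarrow> 'a"

definition infpaths :: "('a, 'k) kgraph \<Rightarrow> ('a, 'k) ipath set" where
  "infpaths G = {x.
     (\<forall>p q. p \<le> q \<longrightarrow> x p q \<in> mor G \<and> deg G (x p q) = (\<lambda>i. q i - p i) \<and>
                     rng G (x p q) = x p p \<and> src G (x p q) = x q q) \<and>
     (\<forall>p q t. p \<le> q \<longrightarrow> q \<le> t \<longrightarrow> cmp G (x p q) (x q t) = x p t) \<and>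
     (\<forall>p q. \<not> p \<le> q \<longrightarrow> x p q = undefined)}"

definition cyl :: "('a, 'k) kgraph \<Rightarrow> 'a \<Rightarrow> ('a, 'k) ipath set" where
  "cyl G l = {x \<in> infpaths G. x (\<lambda>_. 0) (deg G l) = l}"

definition shift :: "('k \<Rightarrow> nat) \<Rightarrow> ('a, 'k) ipath \<Rightarrow> ('a, 'k) ipath" where
  "shift m x = (\<lambda>p q. x (\<lambda>i. p i + m i) (\<lambda>i. q i + m i))"

definition prefix :: "('a, 'k) kgraph \<Rightarrow> 'a \<Rightarrow> ('a, 'k) ipath \<Rightarrow> ('a, 'k) ipath" where
  "prefix G l x = (THE y. y \<in> infpaths G \<and> y (\<lambda>_. 0) (deg G l) = l \<and> shift (deg G l) y = x)"

text \<open>The Borel sigma-algebra of the cylinder topology on Lambda^infty (the cylinders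
form a countable basis, so it is generated by the cylinders).\<close>
definition path_sets :: "('a, 'k) kgraph \<Rightarrow> ('a, 'k) ipath set set" where
  "path_sets G = sigma_sets (infpaths G) (cyl G ` mor G)"

definition comp_measure :: "'x measure \<Rightarrow> 'x set \<Rightarrow> ('x \<Rightarrow> 'x) \<Rightarrow> 'x measure" where
  "comp_measure M D f =
     measure_of D (sets (restrict_space M D)) (\<lambda>A. emeasure M (f ` A))"

definition sbfs :: "'x measure \<Rightarrow> 'i set \<Rightarrow> ('i \<Rightarrow> 'x set) \<Rightarrow> ('i \<Rightarrow> 'x \<Rightarrow> 'x) \<Rightarrow> bool" where
  "sbfs M I D \<tau> \<longleftrightarrow>
     finite I \<and>
     (\<forall>i\<in>I. D i \<in> sets M \<and> \<tau> i \<in> restrict_space M (D i) \<rightarrow>\<^sub>M M \<and>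
        (\<forall>A\<in>sets M. A \<subseteq> D i \<longrightarrow> \<tau> i ` A \<in> sets M) \<and>
        absolutely_continuous (restrict_space M (D i)) (comp_measure M (D i) (\<tau> i)) \<and>
        (AE x in restrict_space M (D i).
           RN_deriv (restrict_space M (D i)) (comp_measure M (D i) (\<tau> i)) x > 0)) \<and>
     emeasure M (space M - (\<Union>i\<in>I. \<tau> i ` D i)) = 0 \<and>
     (\<forall>i\<in>I. \<forall>j\<in>I. i \<noteq> j \<longrightarrow> emeasure M (\<tau> i ` D i \<inter> \<tau> j ` D j) = 0)"

definition coding_map :: "'i set \<Rightarrow> ('i \<Rightarrow> 'x set) \<Rightarrow> ('i \<Rightarrow> 'x \<Rightarrow> 'x) \<Rightarrow> ('x \<Rightarrow> 'x) \<Rightarrow> bool" where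
  "coding_map I D \<tau> c \<longleftrightarrow> (\<forall>i\<in>I. \<forall>x\<in>D i. c (\<tau> i x) = x)"

definition Lambda_sbfs ::
  "('a, 'k) kgraph \<Rightarrow> 'x measure \<Rightarrow> ('a \<Rightarrow> 'x set) \<Rightarrow> ('a \<Rightarrow> 'x \<Rightarrow> 'x) \<Rightarrow>
   (('k \<Rightarrow> nat) \<Rightarrow> 'x \<Rightarrow> 'x) \<Rightarrow> bool" where
  "Lambda_sbfs G M D \<tau> c \<longleftrightarrow>
     (\<forall>m. sbfs M (paths_of_deg G m) D \<tau> \<and> coding_map (paths_of_deg G m) D \<tau> (c m)) \<and>
     (\<forall>v\<in>vertices G. (\<forall>x\<in>D v. \<tau> v x = x) \<and> emeasure M (D v) > 0) \<and>
     (\<forall>l\<in>mor G. \<forall>n\<in>mor G. src G l = rng G n \<longrightarrow>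
        (AE x in M. x \<in> \<tau> n ` D n \<longrightarrow> x \<in> D l) \<and>
        (AE x in M. x \<in> D n \<longrightarrow> \<tau> l (\<tau> n x) = \<tau> (cmp G l n) x)) \<and>
     (\<forall>m n. \<forall>x\<in>space M. c m (c n x) = c (\<lambda>i. m i + n i) x)"

end

theory Submission
  imports Defs
begin

text \<open>The prefixing map \<open>\<sigma>\<^sub>\<lambda>\<close> is a bijection from \<open>Z(s(\<lambda>))\<close> onto \<open>Z(\<lambda>)\<close> with inverse
  \<open>\<sigma>\<^bsup>d(\<lambda>)\<^esup>\<close>; this already gives every set-theoretic condition: for fixed \<open>m\<close> the cylinders
  \<open>Z(\<lambda>)\<close>, \<open>d(\<lambda>) = m\<close>, partition \<open>\<Lambda>\<^sup>\<infinity>\<close>, \<open>\<sigma>\<^sub>\<lambda> \<sigma>\<^sub>\<nu> = \<sigma>\<^sub>\<lambda>\<^sub>\<nu>\<close> and \<open>\<sigma>\<^sup>m \<sigma>\<^sup>n = \<sigma>\<^bsup>m+n\<^esup>\<close>.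
  For an injective map with measurable images, a.e. positivity of the Radon--Nikodym derivative
  of \<open>p \<circ> \<sigma>\<^sub>\<lambda>\<close> is equivalent to \<open>\<sigma>\<^sub>\<lambda>\<close> preserving null sets in both directions. This property
  is stable under composition, and every path of nonzero degree is an edge followed by a shorter
  path, so it propagates from the edges to all of \<open>\<Lambda>\<close>.\<close>

lemma infpath_mor: "x \<in> infpaths G \<Longrightarrow> p \<le> q \<Longrightarrow> x p q \<in> mor G"
  and deg_infpath: "x \<in> infpaths G \<Longrightarrow> p \<le> q \<Longrightarrow> deg G (x p q) = (\<lambda>i. q i - p i)"
  and rng_infpath: "x \<in> infpaths G \<Longrightarrow> p \<le> q \<Longrightarrow> rng G (x p q) = x p p"
  and src_infpath: "x \<in> infpaths G \<Longrightarrow> p \<le> q \<Longrightarrow> src G (x p q) = x q q"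
  and cmp_infpath: "x \<in> infpaths G \<Longrightarrow> p \<le> q \<Longrightarrow> q \<le> t \<Longrightarrow> cmp G (x p q) (x q t) = x p t"
  and infpath_undefined: "x \<in> infpaths G \<Longrightarrow> \<not> p \<le> q \<Longrightarrow> x p q = undefined"
  unfolding infpaths_def by blast+

lemma zero_le_fun [simp]: "(\<lambda>_. 0::nat) \<le> p"
  by (simp add: le_fun_def)

lemma le_shift_iff [simp]: "(\<lambda>i. p i + m i) \<le> (\<lambda>i. q i + (m i :: nat)) \<longleftrightarrow> p \<le> q"
  by (simp add: le_fun_def)

lemma shift_infpath: "x \<in> infpaths G \<Longrightarrow> shift m x \<in> infpaths G"
  unfolding infpaths_def shift_def by simp

lemma shift_shift: "shift m (shift n x) = shift (\<lambda>i. m i + n i) x"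
  unfolding shift_def by (simp add: add.assoc)

lemma shift_zero [simp]: "shift (\<lambda>_. 0) x = x"
  unfolding shift_def by simp

section \<open>Factorisation in a k-graph\<close>

locale kgraph =
  fixes G :: "('a, 'k::finite) kgraph"
  assumes is_kgraph: "is_kgraph G"
begin

lemmas kgraph_laws = is_kgraph[unfolded is_kgraph_def]

lemma rng_mor: "l \<in> mor G \<Longrightarrow> rng G l \<in> mor G"
  and src_mor: "l \<in> mor G \<Longrightarrow> src G l \<in> mor G"
  using kgraph_laws[THEN conjunct2, THEN conjunct1] by blast+

lemma rng_rng [simp]: "l \<in> mor G \<Longrightarrow> rng G (rng G l) = rng G l"
  and src_rng [simp]: "l \<in> mor G \<Longrightarrow> src G (rng G l) = rng G l"
  and rng_src [simp]: "l \<in> mor G \<Longrightarrow> rng G (src G l) = src G l"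
  and src_src [simp]: "l \<in> mor G \<Longrightarrow> src G (src G l) = src G l"
  using kgraph_laws[THEN conjunct2, THEN conjunct2, THEN conjunct1] by blast+

lemma cmp_rng_left [simp]: "l \<in> mor G \<Longrightarrow> cmp G (rng G l) l = l"
  and cmp_src_right [simp]: "l \<in> mor G \<Longrightarrow> cmp G l (src G l) = l"
  using kgraph_laws[THEN conjunct2, THEN conjunct2, THEN conjunct2, THEN conjunct1] by blast+

context
  fixes l n assumes l: "l \<in> mor G" and n: "n \<in> mor G" and ln: "src G l = rng G n"
begin

lemma cmp_mor: "cmp G l n \<in> mor G"
  and rng_cmp [simp]: "rng G (cmp G l n) = rng G l"
  and src_cmp [simp]: "src G (cmp G l n) = src G n"
  and deg_cmp: "deg G (cmp G l n) = (\<lambda>i. deg G l i + deg G n i)"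
  using kgraph_laws[THEN conjunct2, THEN conjunct2, THEN conjunct2, THEN conjunct2, THEN conjunct1]
    l n ln by blast+

end

lemma cmp_assoc:
  "\<lbrakk>l \<in> mor G; n \<in> mor G; q \<in> mor G; src G l = rng G n; src G n = rng G q\<rbrakk>
   \<Longrightarrow> cmp G (cmp G l n) q = cmp G l (cmp G n q)"
  using kgraph_laws[THEN conjunct2, THEN conjunct2, THEN conjunct2, THEN conjunct2, THEN conjunct2,
      THEN conjunct1] by blast

lemma unique_factorisation:
  "\<lbrakk>l \<in> mor G; deg G l = (\<lambda>i. m i + n i)\<rbrakk> \<Longrightarrow>
   \<exists>!(a, b). a \<in> mor G \<and> b \<in> mor G \<and> src G a = rng G b \<and>
            deg G a = m \<and> deg G b = n \<and> cmp G a b = l"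
  using kgraph_laws[THEN conjunct2, THEN conjunct2, THEN conjunct2, THEN conjunct2, THEN conjunct2,
      THEN conjunct2] by blast

lemma deg_vertex:
  assumes v: "v \<in> mor G" and rv: "rng G v = v"
  shows "deg G v = (\<lambda>_. 0)"
proof -
  have sv: "src G v = v" using src_rng[OF v] rv by simp
  have "deg G v = deg G (cmp G v v)" using cmp_rng_left[OF v] rv by simp
  also have "\<dots> = (\<lambda>i. deg G v i + deg G v i)" using deg_cmp[OF v v] sv rv by simp
  finally show ?thesis by (metis add_cancel_right_right)
qed

lemma deg_rng [simp]: "l \<in> mor G \<Longrightarrow> deg G (rng G l) = (\<lambda>_. 0)"
  and deg_src [simp]: "l \<in> mor G \<Longrightarrow> deg G (src G l) = (\<lambda>_. 0)"
  by (simp_all add: deg_vertex rng_mor src_mor)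

definition factorises :: "'a \<Rightarrow> ('k \<Rightarrow> nat) \<Rightarrow> 'a \<Rightarrow> 'a \<Rightarrow> bool" where
  "factorises l r a b \<longleftrightarrow> a \<in> mor G \<and> b \<in> mor G \<and> src G a = rng G b \<and> deg G a = r \<and>
     deg G b = (\<lambda>i. deg G l i - r i) \<and> cmp G a b = l"

lemma unique_factorises:
  assumes "l \<in> mor G" and "deg G l = (\<lambda>i. r i + n i)"
  shows "\<exists>!(a, b). factorises l r a b"
proof -
  have "(\<lambda>i. deg G l i - r i) = n" using assms(2) by simp
  then show ?thesis using unique_factorisation[OF assms] unfolding factorises_def by simp
qed

definition factor :: "'a \<Rightarrow> ('k \<Rightarrow> nat) \<Rightarrow> 'a \<times> 'a" where
  "factor l r = (THE (a, b). factorises l r a b)"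

definition head :: "'a \<Rightarrow> ('k \<Rightarrow> nat) \<Rightarrow> 'a" where
  "head l r = fst (factor l r)"

definition tail :: "'a \<Rightarrow> ('k \<Rightarrow> nat) \<Rightarrow> 'a" where
  "tail l r = snd (factor l r)"

lemma factor_eqI:
  assumes f: "factorises l r a b"
  shows "factor l r = (a, b)"
proof -
  have "l \<in> mor G" "deg G l = (\<lambda>i. r i + deg G b i)"
    using f unfolding factorises_def using cmp_mor deg_cmp by auto
  then show ?thesis
    unfolding factor_def by (rule the1_equality[OF unique_factorises]) (simp add: f)
qed

lemma deg_zero_imp_vertex:
  assumes l: "l \<in> mor G" and d: "deg G l = (\<lambda>_. 0)"
  shows "rng G l = l"
proof -
  have "factorises l (\<lambda>_. 0) (rng G l) l" "factorises l (\<lambda>_. 0) l (src G l)"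
    using l d by (simp_all add: factorises_def rng_mor src_mor)
  then have "(rng G l, l) = (l, src G l)" by (metis factor_eqI)
  then show ?thesis by simp
qed

context
  fixes l r assumes l: "l \<in> mor G" and r: "r \<le> deg G l"
begin

lemma factor_spec:
  "head l r \<in> mor G \<and> tail l r \<in> mor G \<and> src G (head l r) = rng G (tail l r) \<and>
   deg G (head l r) = r \<and> deg G (tail l r) = (\<lambda>i. deg G l i - r i) \<and>
   cmp G (head l r) (tail l r) = l"
proof -
  have "deg G l = (\<lambda>i. r i + (deg G l i - r i))" using r by (auto simp: le_fun_def)
  then have "case factor l r of (a, b) \<Rightarrow> factorises l r a b"
    unfolding factor_def by (rule theI'[OF unique_factorises[OF l]])
  then show ?thesis unfolding head_def tail_def factorises_def by (simp add: case_prod_beta)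
qed

lemma head_mor: "head l r \<in> mor G"
  and tail_mor: "tail l r \<in> mor G"
  and src_head: "src G (head l r) = rng G (tail l r)"
  and deg_head [simp]: "deg G (head l r) = r"
  and cmp_head_tail [simp]: "cmp G (head l r) (tail l r) = l"
  using factor_spec by auto

end

lemma
  assumes a: "a \<in> mor G" and b: "b \<in> mor G" and ab: "src G a = rng G b"
  shows head_cmp: "head (cmp G a b) (deg G a) = a"
    and tail_cmp: "tail (cmp G a b) (deg G a) = b"
proof -
  have "factorises (cmp G a b) (deg G a) a b"
    using a b ab by (simp add: factorises_def deg_cmp cmp_mor)
  then show "head (cmp G a b) (deg G a) = a" "tail (cmp G a b) (deg G a) = b"
    by (simp_all add: head_def tail_def factor_eqI)
qed

context
  fixes a b assumes a: "a \<in> mor G" and b: "b \<in> mor G" and ab: "src G a = rng G b"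
begin

lemma head_cmp_left:
  assumes r: "r \<le> deg G a"
  shows "head (cmp G a b) r = head a r"
proof -
  let ?a1 = "head a r" and ?a2 = "tail a r"
  have a1: "?a1 \<in> mor G" and a2: "?a2 \<in> mor G" and s1: "src G ?a1 = rng G ?a2"
    using factor_spec[OF a r] by auto
  have s2: "src G ?a2 = rng G b" using src_cmp[OF a1 a2 s1] ab cmp_head_tail[OF a r] by simp
  have "cmp G a b = cmp G ?a1 (cmp G ?a2 b)"
    using cmp_assoc[OF a1 a2 b s1 s2] a r by simp
  then show ?thesis
    using head_cmp[OF a1 cmp_mor[OF a2 b s2]] s1 s2 a2 b a r by simp
qed

lemma
  assumes r: "r \<le> deg G b"
  shows head_cmp_right: "head (cmp G a b) (\<lambda>i. deg G a i + r i) = cmp G a (head b r)"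
    and tail_cmp_right: "tail (cmp G a b) (\<lambda>i. deg G a i + r i) = tail b r"
proof -
  let ?b1 = "head b r" and ?b2 = "tail b r"
  have b1: "?b1 \<in> mor G" and b2: "?b2 \<in> mor G" and s1: "src G ?b1 = rng G ?b2"
    using factor_spec[OF b r] by auto
  have r1: "src G a = rng G ?b1" using rng_cmp[OF b1 b2 s1] ab cmp_head_tail[OF b r] by simp
  have "cmp G a b = cmp G (cmp G a ?b1) ?b2"
    using cmp_assoc[OF a b1 b2 r1 s1] b r by simp
  moreover have "deg G (cmp G a ?b1) = (\<lambda>i. deg G a i + r i)"
    using deg_cmp[OF a b1 r1] b r by simp
  ultimately show "head (cmp G a b) (\<lambda>i. deg G a i + r i) = cmp G a ?b1"
    and "tail (cmp G a b) (\<lambda>i. deg G a i + r i) = ?b2"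
    using head_cmp[OF cmp_mor[OF a b1 r1] b2] tail_cmp[OF cmp_mor[OF a b1 r1] b2]
      src_cmp[OF a b1 r1] s1 by simp_all
qed

end

lemma head_deg: "l \<in> mor G \<Longrightarrow> head l (deg G l) = l"
  and tail_deg: "l \<in> mor G \<Longrightarrow> tail l (deg G l) = src G l"
  using head_cmp[of l "src G l"] tail_cmp[of l "src G l"] by (simp_all add: src_mor)

lemma tail_zero: "l \<in> mor G \<Longrightarrow> tail l (\<lambda>_. 0) = l"
  using tail_cmp[of "rng G l" l] by (simp add: rng_mor)

lemma head_head:
  assumes w: "w \<in> mor G" and rs: "r \<le> s" and s: "s \<le> deg G w"
  shows "head (head w s) r = head w r"
  using head_cmp_left[OF head_mor[OF w s] tail_mor[OF w s] src_head[OF w s], of r] rs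
  by (simp add: w s)

definition seg :: "'a \<Rightarrow> ('k \<Rightarrow> nat) \<Rightarrow> ('k \<Rightarrow> nat) \<Rightarrow> 'a" where
  "seg w p q = tail (head w q) p"

context
  fixes w p q assumes w: "w \<in> mor G" and pq: "p \<le> q" and q: "q \<le> deg G w"
begin

lemma seg_mor: "seg w p q \<in> mor G"
  and deg_seg: "deg G (seg w p q) = (\<lambda>i. q i - p i)"
  and rng_seg: "rng G (seg w p q) = seg w p p"
  and src_seg: "src G (seg w p q) = seg w q q"
proof -
  have hq: "head w q \<in> mor G" and dq: "deg G (head w q) = q" using factor_spec[OF w q] by auto
  have p: "p \<le> deg G w" using pq q order_trans by blast
  have pq': "p \<le> deg G (head w q)" using dq pq by simp
  note g = factor_spec[OF hq pq']
  show "seg w p q \<in> mor G" "deg G (seg w p q) = (\<lambda>i. q i - p i)"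
    using g dq unfolding seg_def by auto
  have "seg w p p = src G (head w p)"
    unfolding seg_def using tail_deg[OF head_mor[OF w p]] w p by simp
  also have "\<dots> = rng G (seg w p q)"
    unfolding seg_def using g head_head[OF w pq q] by simp
  finally show "rng G (seg w p q) = seg w p p" by simp
  have "seg w q q = src G (head w q)"
    unfolding seg_def using tail_deg hq dq by metis
  also have "\<dots> = src G (seg w p q)"
    unfolding seg_def using g src_cmp by metis
  finally show "src G (seg w p q) = seg w q q" by simp
qed

end

lemma cmp_seg_seg:
  assumes w: "w \<in> mor G" and pq: "p \<le> q" and qt: "q \<le> t" and t: "t \<le> deg G w"
  shows "cmp G (seg w p q) (seg w q t) = seg w p t"
proof -
  let ?u = "head w t"
  have u: "?u \<in> mor G" and du: "deg G ?u = t" using factor_spec[OF w t] by auto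
  have q: "q \<le> deg G ?u" and p: "p \<le> deg G ?u" using du pq qt by auto
  have qw: "q \<le> deg G w" using qt t order_trans by blast
  have huq: "head ?u q = head w q" using head_head[OF w qt t] .
  have hup: "head ?u p = head w p" using head_head[OF w order_trans[OF pq qt] t] .
  have hq: "head ?u q \<in> mor G" using head_mor[OF u q] .
  have pq': "p \<le> deg G (head ?u q)" using u q pq by simp
  have e1: "?u = cmp G (head ?u q) (seg w q t)"
    unfolding seg_def using cmp_head_tail[OF u q] by simp
  have e2: "head ?u q = cmp G (head ?u p) (seg w p q)"
    unfolding seg_def using cmp_head_tail[OF hq pq'] head_head[OF u pq q] huq by simp
  have mA: "head ?u p \<in> mor G" using head_mor[OF u p] .
  have mB: "seg w p q \<in> mor G" and mC: "seg w q t \<in> mor G"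
    using seg_mor[OF w pq qw] seg_mor[OF w qt t] .
  have s1: "src G (head ?u p) = rng G (seg w p q)"
    using src_head[OF hq pq'] head_head[OF u pq q] huq unfolding seg_def by simp
  have s2: "src G (seg w p q) = rng G (seg w q t)"
    using src_seg[OF w pq qw] rng_seg[OF w qt t] by simp
  have "?u = cmp G (head ?u p) (cmp G (seg w p q) (seg w q t))"
    using e1 e2 cmp_assoc[OF mA mB mC s1 s2] by simp
  then have "tail ?u p = cmp G (seg w p q) (seg w q t)"
    using tail_cmp[OF mA cmp_mor[OF mB mC s2]] rng_cmp[OF mB mC s2] s1 u p by simp
  then show ?thesis unfolding seg_def by simp
qed

lemma seg_cmp_left:
  assumes a: "a \<in> mor G" and b: "b \<in> mor G" and ab: "src G a = rng G b" and q: "q \<le> deg G a"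
  shows "seg (cmp G a b) p q = seg a p q"
  unfolding seg_def using head_cmp_left[OF a b ab q] by simp

lemma seg_cmp_right:
  assumes a: "a \<in> mor G" and b: "b \<in> mor G" and ab: "src G a = rng G b"
    and pq: "p \<le> q" and q: "q \<le> deg G b"
  shows "seg (cmp G a b) (\<lambda>i. deg G a i + p i) (\<lambda>i. deg G a i + q i) = seg b p q"
proof -
  have hb: "head b q \<in> mor G" and r: "rng G (head b q) = rng G b"
    using factor_spec[OF b q] rng_cmp[OF head_mor[OF b q] tail_mor[OF b q] src_head[OF b q]] by auto
  have pq': "p \<le> deg G (head b q)" using b pq q by simp
  show ?thesis unfolding seg_def head_cmp_right[OF a b ab q]
    using tail_cmp_right[OF a hb _ pq'] r ab by simp
qed

lemma seg_zero_left: "w \<in> mor G \<Longrightarrow> q \<le> deg G w \<Longrightarrow> seg w (\<lambda>_. 0) q = head w q"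
  unfolding seg_def using tail_zero head_mor by blast

lemma seg_infpath:
  assumes x: "x \<in> infpaths G" and pq: "p \<le> q" and qT: "q \<le> T"
  shows "seg (x (\<lambda>_. 0) T) p q = x p q"
proof -
  have "head (x (\<lambda>_. 0) T) q = x (\<lambda>_. 0) q"
    using head_cmp[of "x (\<lambda>_. 0) q" "x q T"] cmp_infpath[OF x _ qT]
    by (simp add: x qT infpath_mor deg_infpath src_infpath rng_infpath)
  moreover have "tail (x (\<lambda>_. 0) q) p = x p q"
    using tail_cmp[of "x (\<lambda>_. 0) p" "x p q"] cmp_infpath[OF x _ pq]
    by (simp add: x pq infpath_mor deg_infpath src_infpath rng_infpath)
  ultimately show ?thesis unfolding seg_def by simp
qed

section \<open>Concatenating a morphism with an infinite path\<close>

text \<open>For \<open>T \<ge> d(l)\<close>, \<open>cat_init l x T\<close> is the initial segment of degree \<open>T\<close> of the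
  concatenation \<open>l x\<close>; the segments of these morphisms define \<open>cat l x\<close>.\<close>

definition cat_init :: "'a \<Rightarrow> ('a, 'k) ipath \<Rightarrow> ('k \<Rightarrow> nat) \<Rightarrow> 'a" where
  "cat_init l x T = cmp G l (x (\<lambda>_. 0) (\<lambda>i. T i - deg G l i))"

definition cat :: "'a \<Rightarrow> ('a, 'k) ipath \<Rightarrow> ('a, 'k) ipath" where
  "cat l x = (\<lambda>p q. if p \<le> q then seg (cat_init l x (\<lambda>i. max (q i) (deg G l i))) p q else undefined)"

context
  fixes l x
  assumes l: "l \<in> mor G" and x: "x \<in> infpaths G" and x0: "x (\<lambda>_. 0) (\<lambda>_. 0) = src G l"
begin

lemma
  assumes T: "deg G l \<le> T"
  shows cat_init_mor: "cat_init l x T \<in> mor G"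
    and deg_cat_init: "deg G (cat_init l x T) = T"
proof -
  let ?y = "x (\<lambda>_. 0) (\<lambda>i. T i - deg G l i)"
  have y: "?y \<in> mor G" using infpath_mor[OF x zero_le_fun] .
  have ly: "src G l = rng G ?y" using rng_infpath[OF x zero_le_fun] x0 by simp
  show "cat_init l x T \<in> mor G" unfolding cat_init_def using cmp_mor[OF l y ly] .
  have "(\<lambda>i. deg G l i + (T i - deg G l i)) = T" using T by (simp add: le_fun_def fun_eq_iff)
  then show "deg G (cat_init l x T) = T"
    unfolding cat_init_def deg_cmp[OF l y ly] deg_infpath[OF x zero_le_fun] by simp
qed

lemma seg_cat_init:
  assumes T: "deg G l \<le> T" and TT': "T \<le> T'" and qT: "q \<le> T"
  shows "seg (cat_init l x T') p q = seg (cat_init l x T) p q"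
proof -
  let ?a = "x (\<lambda>_. 0) (\<lambda>i. T i - deg G l i)" and ?b = "x (\<lambda>i. T i - deg G l i) (\<lambda>i. T' i - deg G l i)"
  have le: "(\<lambda>i. T i - deg G l i) \<le> (\<lambda>i. T' i - deg G l i)"
    using TT' by (auto simp: le_fun_def intro: diff_le_mono)
  have a: "?a \<in> mor G" and b: "?b \<in> mor G" and la: "src G l = rng G ?a" and ab: "src G ?a = rng G ?b"
    using infpath_mor[OF x] rng_infpath[OF x] src_infpath[OF x] x0 le by simp_all
  have "cat_init l x T' = cmp G (cat_init l x T) ?b"
    unfolding cat_init_def using cmp_infpath[OF x zero_le_fun le] cmp_assoc[OF l a b la ab] by simp
  then show ?thesis
    using seg_cmp_left[OF cat_init_mor[OF T] b _ ] src_cmp[OF l a la] ab deg_cat_init[OF T] qT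
    unfolding cat_init_def by simp
qed

lemma cat_eq_seg:
  assumes pq: "p \<le> q" and T: "deg G l \<le> T" and qT: "q \<le> T"
  shows "cat l x p q = seg (cat_init l x T) p q"
proof -
  let ?M = "\<lambda>i. max (q i) (deg G l i)"
  have "deg G l \<le> ?M" "?M \<le> T" "q \<le> ?M" using T qT by (auto simp: le_fun_def)
  then show ?thesis unfolding cat_def using pq seg_cat_init[of ?M T q p] by simp
qed

lemma cat_infpath: "cat l x \<in> infpaths G"
proof -
  have "cat l x p q \<in> mor G \<and> deg G (cat l x p q) = (\<lambda>i. q i - p i) \<and>
        rng G (cat l x p q) = cat l x p p \<and> src G (cat l x p q) = cat l x q q"
    if pq: "p \<le> q" for p q
  proof -
    let ?T = "\<lambda>i. max (q i) (deg G l i)"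
    have T: "deg G l \<le> ?T" and qT: "q \<le> ?T" by (auto simp: le_fun_def)
    have pT: "p \<le> ?T" using pq qT by (rule order_trans)
    show ?thesis
      unfolding cat_eq_seg[OF pq T qT] cat_eq_seg[OF order_refl T pT] cat_eq_seg[OF order_refl T qT]
      using seg_mor deg_seg rng_seg src_seg cat_init_mor[OF T] deg_cat_init[OF T] pq qT by simp
  qed
  moreover have "cmp G (cat l x p q) (cat l x q t) = cat l x p t"
    if pq: "p \<le> q" and qt: "q \<le> t" for p q t
  proof -
    let ?T = "\<lambda>i. max (t i) (deg G l i)"
    have T: "deg G l \<le> ?T" and tT: "t \<le> ?T" by (auto simp: le_fun_def)
    have qT: "q \<le> ?T" using qt tT by (rule order_trans)
    show ?thesis
      unfolding cat_eq_seg[OF pq T qT] cat_eq_seg[OF qt T tT] cat_eq_seg[OF order_trans[OF pq qt] T tT]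
      using cmp_seg_seg cat_init_mor[OF T] deg_cat_init[OF T] pq qt tT by simp
  qed
  ultimately show ?thesis unfolding infpaths_def cat_def by auto
qed

lemma cat_initial: "cat l x (\<lambda>_. 0) (deg G l) = l"
proof -
  have "cat_init l x (deg G l) = cmp G l (src G l)" unfolding cat_init_def using x0 by simp
  then have "cat_init l x (deg G l) = l" using l by simp
  then show ?thesis
    using cat_eq_seg[OF zero_le_fun order_refl order_refl] seg_zero_left head_deg l by simp
qed

lemma shift_cat: "shift (deg G l) (cat l x) = x"
proof (intro ext)
  fix p q
  show "shift (deg G l) (cat l x) p q = x p q"
  proof (cases "p \<le> q")
    case True
    let ?T = "\<lambda>i. q i + deg G l i"
    have T: "deg G l \<le> ?T" and pqT: "(\<lambda>i. p i + deg G l i) \<le> ?T" using True by (auto simp: le_fun_def)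
    have y: "x (\<lambda>_. 0) q \<in> mor G" and ly: "src G l = rng G (x (\<lambda>_. 0) q)"
      and dy: "deg G (x (\<lambda>_. 0) q) = q"
      using infpath_mor[OF x] rng_infpath[OF x] deg_infpath[OF x] x0 by simp_all
    have "shift (deg G l) (cat l x) p q = seg (cat_init l x ?T) (\<lambda>i. p i + deg G l i) ?T"
      unfolding shift_def using cat_eq_seg[OF pqT T order_refl] by simp
    also have "\<dots> = seg (cmp G l (x (\<lambda>_. 0) q)) (\<lambda>i. deg G l i + p i) (\<lambda>i. deg G l i + q i)"
      unfolding cat_init_def by (simp add: add.commute)
    also have "\<dots> = seg (x (\<lambda>_. 0) q) p q"
      using seg_cmp_right[OF l y ly True] dy by simp
    also have "\<dots> = x p q" using seg_infpath[OF x True order_refl] .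
    finally show ?thesis .
  next
    case False
    then show ?thesis unfolding shift_def cat_def using infpath_undefined[OF x False] by simp
  qed
qed

lemma cat_unique:
  assumes y: "y \<in> infpaths G" and y0: "y (\<lambda>_. 0) (deg G l) = l" and ys: "shift (deg G l) y = x"
  shows "y = cat l x"
proof (intro ext)
  fix p q
  show "y p q = cat l x p q"
  proof (cases "p \<le> q")
    case True
    let ?T = "\<lambda>i. max (q i) (deg G l i)"
    have T: "deg G l \<le> ?T" and qT: "q \<le> ?T" by (auto simp: le_fun_def)
    have "y (deg G l) ?T = shift (deg G l) y (\<lambda>_. 0) (\<lambda>i. ?T i - deg G l i)"
      unfolding shift_def by (simp add: max_def)
    then have "y (\<lambda>_. 0) ?T = cat_init l x ?T"
      unfolding cat_init_def using cmp_infpath[OF y zero_le_fun T] y0 ys by simp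
    then have "y p q = seg (cat_init l x ?T) p q" using seg_infpath[OF y True qT] by simp
    also have "\<dots> = cat l x p q" using cat_eq_seg[OF True T qT] by simp
    finally show ?thesis .
  next
    case False
    then show ?thesis unfolding cat_def using infpath_undefined[OF y False] by simp
  qed
qed

lemma prefix_eq_cat: "prefix G l x = cat l x"
  unfolding prefix_def
proof (rule the_equality)
  show "cat l x \<in> infpaths G \<and> cat l x (\<lambda>_. 0) (deg G l) = l \<and> shift (deg G l) (cat l x) = x"
    using cat_infpath cat_initial shift_cat by blast
qed (use cat_unique in blast)

end

lemma cyl_src: "l \<in> mor G \<Longrightarrow> cyl G (src G l) = {x \<in> infpaths G. x (\<lambda>_. 0) (\<lambda>_. 0) = src G l}"
  unfolding cyl_def by simp

lemma cyl_rng: "x \<in> cyl G l \<Longrightarrow> x (\<lambda>_. 0) (\<lambda>_. 0) = rng G l"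
  unfolding cyl_def using rng_infpath[of x G "\<lambda>_. 0" "deg G l"] by auto

lemma cyl_subset_cyl_rng: "l \<in> mor G \<Longrightarrow> cyl G l \<subseteq> cyl G (rng G l)"
  using cyl_rng unfolding cyl_def by auto

context
  fixes l assumes l: "l \<in> mor G"
begin

lemma
  assumes x: "x \<in> cyl G (src G l)"
  shows prefix_cyl: "prefix G l x \<in> cyl G l"
    and shift_prefix: "shift (deg G l) (prefix G l x) = x"
proof -
  have x': "x \<in> infpaths G" "x (\<lambda>_. 0) (\<lambda>_. 0) = src G l" using x unfolding cyl_src[OF l] by auto
  show "prefix G l x \<in> cyl G l"
    unfolding prefix_eq_cat[OF l x'] cyl_def using cat_infpath[OF l x'] cat_initial[OF l x'] by simp
  show "shift (deg G l) (prefix G l x) = x"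
    unfolding prefix_eq_cat[OF l x'] using shift_cat[OF l x'] .
qed

lemma
  assumes y: "y \<in> cyl G l"
  shows shift_cyl: "shift (deg G l) y \<in> cyl G (src G l)"
    and prefix_shift: "prefix G l (shift (deg G l) y) = y"
proof -
  have y': "y \<in> infpaths G" "y (\<lambda>_. 0) (deg G l) = l" using y unfolding cyl_def by auto
  have s0: "shift (deg G l) y (\<lambda>_. 0) (\<lambda>_. 0) = src G l"
    unfolding shift_def using src_infpath[OF y'(1) zero_le_fun, of "deg G l"] y'(2) by simp
  then show "shift (deg G l) y \<in> cyl G (src G l)"
    unfolding cyl_src[OF l] using shift_infpath[OF y'(1)] by simp
  show "prefix G l (shift (deg G l) y) = y"
    using prefix_eq_cat[OF l shift_infpath[OF y'(1)] s0]
      cat_unique[OF l shift_infpath[OF y'(1)] s0 y'(1) y'(2) refl] by simp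
qed

lemma prefix_image:
  assumes A: "A \<subseteq> cyl G (src G l)"
  shows "prefix G l ` A = {y \<in> cyl G l. shift (deg G l) y \<in> A}"
proof
  show "prefix G l ` A \<subseteq> {y \<in> cyl G l. shift (deg G l) y \<in> A}"
    using prefix_cyl shift_prefix A by auto
  show "{y \<in> cyl G l. shift (deg G l) y \<in> A} \<subseteq> prefix G l ` A"
    using prefix_shift by (auto intro: rev_image_eqI)
qed

lemma prefix_image_cyl: "prefix G l ` cyl G (src G l) = cyl G l"
  using prefix_image[OF order_refl] shift_cyl by auto

lemma inj_on_prefix: "inj_on (prefix G l) (cyl G (src G l))"
  by (rule inj_on_inverseI[of _ "shift (deg G l)"]) (rule shift_prefix)

end

lemma src_vertex:
  assumes "v \<in> vertices G" shows "src G v = v"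
proof -
  have "v \<in> mor G" "rng G v = v" using assms unfolding vertices_def by auto
  then show ?thesis using src_rng[of v] by simp
qed

lemma prefix_vertex: "v \<in> vertices G \<Longrightarrow> x \<in> cyl G (src G v) \<Longrightarrow> prefix G v x = x"
  using prefix_shift[of v x] deg_vertex[of v] src_vertex unfolding vertices_def by force

lemma coding_map_shift: "coding_map (paths_of_deg G m) (\<lambda>l. cyl G (src G l)) (prefix G) (shift m)"
  unfolding coding_map_def paths_of_deg_def using shift_prefix by auto

lemma prefix_prefix:
  assumes l: "l \<in> mor G" and n: "n \<in> mor G" and ln: "src G l = rng G n"
    and x: "x \<in> cyl G (src G n)"
  shows "prefix G l (prefix G n x) = prefix G (cmp G l n) x"
proof -
  let ?y = "prefix G n x"
  let ?z = "prefix G l ?y"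
  have y: "?y \<in> cyl G n" and sy: "shift (deg G n) ?y = x" using prefix_cyl[OF n x] shift_prefix[OF n x] .
  have ys: "?y \<in> cyl G (src G l)" using y cyl_subset_cyl_rng[OF n] ln by auto
  have z: "?z \<in> cyl G l" and sz: "shift (deg G l) ?z = ?y"
    using prefix_cyl[OF l ys] shift_prefix[OF l ys] .
  have zi: "?z \<in> infpaths G" using z unfolding cyl_def by auto
  have le: "deg G l \<le> (\<lambda>i. deg G l i + deg G n i)" by (simp add: le_fun_def)
  have "?z (deg G l) (\<lambda>i. deg G l i + deg G n i) = shift (deg G l) ?z (\<lambda>_. 0) (deg G n)"
    unfolding shift_def by (simp add: add.commute)
  then have "?z (deg G l) (\<lambda>i. deg G l i + deg G n i) = n" using sz y unfolding cyl_def by simp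
  then have "?z (\<lambda>_. 0) (\<lambda>i. deg G l i + deg G n i) = cmp G l n"
    using cmp_infpath[OF zi zero_le_fun le] z unfolding cyl_def by simp
  then have zc: "?z \<in> cyl G (cmp G l n)" using zi deg_cmp[OF l n ln] unfolding cyl_def by simp
  have "shift (deg G (cmp G l n)) ?z = shift (deg G n) (shift (deg G l) ?z)"
    unfolding deg_cmp[OF l n ln] shift_shift by (simp add: add.commute)
  then have "shift (deg G (cmp G l n)) ?z = x" using sz sy by simp
  then show ?thesis using prefix_shift[OF cmp_mor[OF l n ln] zc] by simp
qed

lemma cyl_disjoint: "deg G l = deg G l' \<Longrightarrow> l \<noteq> l' \<Longrightarrow> cyl G l \<inter> cyl G l' = {}"
  unfolding cyl_def by auto

lemma UN_cyl_paths_of_deg: "(\<Union>l\<in>paths_of_deg G m. cyl G l) = infpaths G"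
proof
  show "infpaths G \<subseteq> (\<Union>l\<in>paths_of_deg G m. cyl G l)"
  proof
    fix y assume y: "y \<in> infpaths G"
    then have "y (\<lambda>_. 0) m \<in> paths_of_deg G m" and "y \<in> cyl G (y (\<lambda>_. 0) m)"
      using infpath_mor[OF y] deg_infpath[OF y] by (simp_all add: paths_of_deg_def cyl_def)
    then show "y \<in> (\<Union>l\<in>paths_of_deg G m. cyl G l)" by blast
  qed
qed (auto simp: cyl_def)

lemma edge_factorisation:
  assumes l: "l \<in> mor G" and d: "deg G l \<noteq> (\<lambda>_. 0)"
  obtains a b where "a \<in> edges G" "b \<in> mor G" "src G a = rng G b" "cmp G a b = l"
    "sum (deg G b) UNIV < sum (deg G l) UNIV"
proof -
  obtain i where i: "deg G l i > 0" using d by (auto simp: fun_eq_iff)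
  have ei: "basis_deg i \<le> deg G l" using i by (auto simp: le_fun_def basis_deg_def)
  note f = factor_spec[OF l ei]
  have "head l (basis_deg i) \<in> edges G" unfolding edges_def paths_of_deg_def using f by auto
  moreover have "sum (deg G (tail l (basis_deg i))) UNIV < sum (deg G l) UNIV"
    using f i by (intro sum_strict_mono_ex1) (auto simp: basis_deg_def)
  ultimately show ?thesis using that f by blast
qed

end

section \<open>Maps preserving null sets\<close>

lemma
  assumes D: "D \<in> sets M" and inj: "inj_on f D"
    and img: "\<And>A. A \<in> sets M \<Longrightarrow> A \<subseteq> D \<Longrightarrow> f ` A \<in> sets M"
  shows sets_comp_measure: "sets (comp_measure M D f) = sets (restrict_space M D)"
    and emeasure_comp_measure:
      "A \<in> sets (restrict_space M D) \<Longrightarrow> emeasure (comp_measure M D f) A = emeasure M (f ` A)"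
proof -
  let ?R = "restrict_space M D"
  have DS: "D \<subseteq> space M" using sets.sets_into_space[OF D] .
  have sR: "space ?R = D" using DS by (simp add: space_restrict_space Int_absorb2)
  have iff: "B \<in> sets ?R \<longleftrightarrow> B \<subseteq> D \<and> B \<in> sets M" for B
    using sets_restrict_space_iff[of D M B] D DS by (simp add: Int_absorb2)
  have sa: "sigma_algebra D (sets ?R)" using sets.sigma_algebra_axioms[of ?R] sR by simp
  have pow: "sets ?R \<subseteq> Pow D" using iff by auto
  show "sets (comp_measure M D f) = sets ?R"
    unfolding comp_measure_def using sets_measure_of[OF pow] sigma_algebra.sigma_sets_eq[OF sa] by simp
  have pos: "positive (sets ?R) (\<lambda>A. emeasure M (f ` A))" unfolding positive_def by simp
  have ca: "countably_additive (sets ?R) (\<lambda>A. emeasure M (f ` A))"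
    unfolding countably_additive_def
  proof (intro allI impI)
    fix A :: "nat \<Rightarrow> _" assume r: "range A \<subseteq> sets ?R" and dj: "disjoint_family A"
    have AD: "A i \<subseteq> D" "A i \<in> sets M" for i using r iff by auto
    have "disjoint_family (\<lambda>i. f ` A i)"
      using dj inj AD unfolding disjoint_family_on_def inj_on_def by blast
    then have "(\<Sum>i. emeasure M (f ` A i)) = emeasure M (\<Union>i. f ` A i)"
      using AD img by (intro suminf_emeasure) auto
    then show "(\<Sum>i. emeasure M (f ` A i)) = emeasure M (f ` \<Union> (range A))" by (simp add: image_UN)
  qed
  show "A \<in> sets ?R \<Longrightarrow> emeasure (comp_measure M D f) A = emeasure M (f ` A)"
    unfolding comp_measure_def by (rule emeasure_measure_of_sigma[OF sa pos ca])
qed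

lemma absolutely_continuous_RN_deriv_pos_iff:
  assumes M: "sigma_finite_measure M" and sN: "sets N = sets M"
  shows "absolutely_continuous M N \<and> (AE x in M. RN_deriv M N x > 0) \<longleftrightarrow>
         (\<forall>A\<in>sets M. emeasure M A = 0 \<longleftrightarrow> emeasure N A = 0)"
proof
  assume h: "absolutely_continuous M N \<and> (AE x in M. RN_deriv M N x > 0)"
  have dens: "density M (RN_deriv M N) = N"
    using sigma_finite_measure.density_RN_deriv[OF M] h sN by blast
  show "\<forall>A\<in>sets M. emeasure M A = 0 \<longleftrightarrow> emeasure N A = 0"
  proof (intro ballI iffI)
    fix A assume A: "A \<in> sets M" and "emeasure M A = 0"
    then have "A \<in> null_sets N" using h unfolding absolutely_continuous_def by blast
    then show "emeasure N A = 0" by (rule null_setsD1)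
  next
    fix A assume A: "A \<in> sets M" and "emeasure N A = 0"
    then have "(\<integral>\<^sup>+ x. RN_deriv M N x * indicator A x \<partial>M) = 0"
      using emeasure_density[of "RN_deriv M N" M A] dens by simp
    then have "AE x in M. RN_deriv M N x * indicator A x = 0"
      using A by (subst (asm) nn_integral_0_iff_AE) auto
    then have "AE x in M. x \<notin> A" using h[THEN conjunct2]
      by eventually_elim (auto simp: indicator_def split: if_splits)
    moreover have "{x\<in>space M. \<not> x \<notin> A} = A" using sets.sets_into_space[OF A] by auto
    ultimately show "emeasure M A = 0" using AE_iff_measurable[OF A] by simp
  qed
next
  assume h: "\<forall>A\<in>sets M. emeasure M A = 0 \<longleftrightarrow> emeasure N A = 0"
  have ac: "absolutely_continuous M N"
    unfolding absolutely_continuous_def using h sN by auto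
  have dens: "density M (RN_deriv M N) = N"
    using sigma_finite_measure.density_RN_deriv[OF M ac sN] .
  let ?Z = "{x\<in>space M. RN_deriv M N x = 0}"
  have Z: "?Z \<in> sets M" by measurable
  have "(\<integral>\<^sup>+ x. RN_deriv M N x * indicator ?Z x \<partial>M) = 0"
    using Z by (subst nn_integral_0_iff_AE) (auto simp: indicator_def)
  then have "emeasure N ?Z = 0" using emeasure_density[of "RN_deriv M N" M ?Z] Z dens by simp
  then have "emeasure M ?Z = 0" using h Z by blast
  then have "AE x in M. RN_deriv M N x \<noteq> 0" using AE_iff_measurable[OF Z] by simp
  then have "AE x in M. RN_deriv M N x > 0" by eventually_elim (simp add: zero_less_iff_neq_zero)
  with ac show "absolutely_continuous M N \<and> (AE x in M. RN_deriv M N x > 0)" by blast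
qed

definition null_preserving :: "'x measure \<Rightarrow> 'x set \<Rightarrow> ('x \<Rightarrow> 'x) \<Rightarrow> bool" where
  "null_preserving M D f \<longleftrightarrow>
     (\<forall>A\<in>sets M. A \<subseteq> D \<longrightarrow> (emeasure M A = 0 \<longleftrightarrow> emeasure M (f ` A) = 0))"

lemma RN_deriv_pos_iff_null_preserving:
  assumes M: "sigma_finite_measure M" and D: "D \<in> sets M" and inj: "inj_on f D"
    and img: "\<And>A. A \<in> sets M \<Longrightarrow> A \<subseteq> D \<Longrightarrow> f ` A \<in> sets M"
  shows "absolutely_continuous (restrict_space M D) (comp_measure M D f) \<and>
         (AE x in restrict_space M D. RN_deriv (restrict_space M D) (comp_measure M D f) x > 0)
         \<longleftrightarrow> null_preserving M D f"
proof -
  let ?R = "restrict_space M D"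
  have sf: "sigma_finite_measure ?R"
    by (rule sigma_finite_measure_restrict_space[OF M D])
  have DS: "D \<subseteq> space M" using sets.sets_into_space[OF D] .
  have iff: "A \<in> sets ?R \<longleftrightarrow> A \<in> sets M \<and> A \<subseteq> D" for A
    using sets_restrict_space_iff[of D M A] D DS by (auto simp: Int_absorb2)
  have em: "emeasure ?R A = emeasure M A" if "A \<in> sets ?R" for A
    using emeasure_restrict_space[of D M A] D DS that iff by (simp add: Int_absorb2)
  have "absolutely_continuous ?R (comp_measure M D f) \<and>
        (AE x in ?R. RN_deriv ?R (comp_measure M D f) x > 0) \<longleftrightarrow>
        (\<forall>A\<in>sets ?R. emeasure ?R A = 0 \<longleftrightarrow> emeasure (comp_measure M D f) A = 0)"
    by (rule absolutely_continuous_RN_deriv_pos_iff[OF sf sets_comp_measure[OF D inj img]])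
  also have "\<dots> \<longleftrightarrow> null_preserving M D f"
    unfolding null_preserving_def using em emeasure_comp_measure[OF D inj img] iff by auto
  finally show ?thesis .
qed

lemma null_preserving_compose:
  assumes g: "null_preserving M D g" and f: "null_preserving M E f"
    and g_sets: "\<And>A. A \<in> sets M \<Longrightarrow> A \<subseteq> D \<Longrightarrow> g ` A \<in> sets M" and gDE: "g ` D \<subseteq> E"
    and h: "\<And>x. x \<in> D \<Longrightarrow> h x = f (g x)"
  shows "null_preserving M D h"
  unfolding null_preserving_def
proof (intro ballI impI)
  fix A assume A: "A \<in> sets M" "A \<subseteq> D"
  have gA: "g ` A \<subseteq> E" using gDE A(2) by blast
  have "h ` A = (\<lambda>x. f (g x)) ` A" using h A(2) by (intro image_cong) auto
  then have "h ` A = f ` g ` A" by (simp add: image_image)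
  moreover note g[unfolded null_preserving_def, rule_format, OF A]
  moreover note f[unfolded null_preserving_def, rule_format, OF g_sets[OF A] gA]
  ultimately show "emeasure M A = 0 \<longleftrightarrow> emeasure M (h ` A) = 0" by simp
qed

section \<open>Prefixing maps on the path space\<close>

lemma edge_mor: "e \<in> edges G \<Longrightarrow> e \<in> mor G"
  unfolding edges_def paths_of_deg_def by auto

locale kgraph_path_space = kgraph G + sigma_finite_measure P
  for G :: "('a, 'k::finite) kgraph" and P :: "('a, 'k) ipath measure" +
  assumes space_P: "space P = infpaths G" and sets_P: "sets P = path_sets G"
    and shift_measurable: "\<And>n. shift n \<in> P \<rightarrow>\<^sub>M P"
begin

lemma sets_cyl: "l \<in> mor G \<Longrightarrow> cyl G l \<in> sets P"
  using sets_P unfolding path_sets_def by (auto intro: sigma_sets.Basic)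

lemma sets_prefix_image:
  assumes l: "l \<in> mor G" and A: "A \<in> sets P" "A \<subseteq> cyl G (src G l)"
  shows "prefix G l ` A \<in> sets P"
proof -
  have "prefix G l ` A = cyl G l \<inter> (shift (deg G l) -` A \<inter> space P)"
    unfolding prefix_image[OF l A(2)] space_P cyl_def by auto
  moreover have "shift (deg G l) -` A \<inter> space P \<in> sets P"
    using measurable_sets[OF shift_measurable A(1)] .
  ultimately show ?thesis using sets_cyl[OF l] by auto
qed

lemma prefix_RN_deriv_pos_iff:
  assumes l: "l \<in> mor G"
  shows "absolutely_continuous (restrict_space P (cyl G (src G l)))
           (comp_measure P (cyl G (src G l)) (prefix G l)) \<and>
         (AE x in restrict_space P (cyl G (src G l)).
            RN_deriv (restrict_space P (cyl G (src G l)))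
              (comp_measure P (cyl G (src G l)) (prefix G l)) x > 0)
         \<longleftrightarrow> null_preserving P (cyl G (src G l)) (prefix G l)"
  by (rule RN_deriv_pos_iff_null_preserving[OF sigma_finite_measure_axioms sets_cyl[OF src_mor[OF l]]
        inj_on_prefix[OF l] sets_prefix_image[OF l]])

lemma null_preserving_prefix:
  assumes edges: "\<And>e. e \<in> edges G \<Longrightarrow> null_preserving P (cyl G (src G e)) (prefix G e)"
    and l: "l \<in> mor G"
  shows "null_preserving P (cyl G (src G l)) (prefix G l)"
  using l
proof (induction "sum (deg G l) UNIV" arbitrary: l rule: less_induct)
  case less
  show ?case
  proof (cases "deg G l = (\<lambda>_. 0)")
    case True
    have "l \<in> vertices G"
      using deg_zero_imp_vertex[OF less.prems True] less.prems unfolding vertices_def by simp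
    then have "prefix G l x = x" if "x \<in> cyl G (src G l)" for x
      using prefix_vertex that by simp
    then have "prefix G l ` A = id ` A" if "A \<subseteq> cyl G (src G l)" for A
      using that by (intro image_cong) auto
    then show ?thesis unfolding null_preserving_def by simp
  next
    case False
    then obtain a b where a: "a \<in> edges G" and b: "b \<in> mor G" and ab: "src G a = rng G b"
      and l: "cmp G a b = l" and smaller: "sum (deg G b) UNIV < sum (deg G l) UNIV"
      using edge_factorisation[OF less.prems] by blast
    have "prefix G b ` cyl G (src G b) \<subseteq> cyl G (src G a)"
      using prefix_image_cyl[OF b] cyl_subset_cyl_rng[OF b] ab by simp
    moreover have "src G l = src G b" using l src_cmp[OF edge_mor[OF a] b ab] by simp
    ultimately show ?thesis
      using null_preserving_compose[OF less.hyps[OF smaller b] edges[OF a] sets_prefix_image[OF b]]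
        prefix_prefix[OF edge_mor[OF a] b ab] l by simp
  qed
qed

lemma sbfs_prefix:
  assumes fin: "finite (paths_of_deg G m)"
    and meas: "\<And>l. l \<in> mor G \<Longrightarrow> prefix G l \<in> restrict_space P (cyl G (src G l)) \<rightarrow>\<^sub>M P"
    and null: "\<And>l. l \<in> mor G \<Longrightarrow> null_preserving P (cyl G (src G l)) (prefix G l)"
  shows "sbfs P (paths_of_deg G m) (\<lambda>l. cyl G (src G l)) (prefix G)"
proof -
  have mor: "l \<in> mor G" if "l \<in> paths_of_deg G m" for l using that unfolding paths_of_deg_def by simp
  have "(\<Union>l\<in>paths_of_deg G m. prefix G l ` cyl G (src G l)) = space P"
    using UN_cyl_paths_of_deg prefix_image_cyl[OF mor] space_P by simp
  moreover have "prefix G l ` cyl G (src G l) \<inter> prefix G l' ` cyl G (src G l') = {}"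
    if "l \<in> paths_of_deg G m" "l' \<in> paths_of_deg G m" "l \<noteq> l'" for l l'
    using that cyl_disjoint prefix_image_cyl[OF mor] unfolding paths_of_deg_def by simp
  ultimately show ?thesis
    unfolding sbfs_def
    using fin sets_cyl src_mor meas sets_prefix_image prefix_RN_deriv_pos_iff null mor by simp
qed

end

theorem mainTheorem6:
  fixes G :: "('a, 'k::finite) kgraph" and P :: "('a, 'k) ipath measure"
  assumes "is_kgraph G" and "finite_kgraph G" and "no_sources G" and "strongly_connected G"
    and "prob_space P" and "space P = infpaths G" and "sets P = path_sets G"
    and "\<forall>l\<in>mor G. prefix G l \<in> restrict_space P (cyl G (src G l)) \<rightarrow>\<^sub>M P"
    and "\<forall>n. shift n \<in> P \<rightarrow>\<^sub>M P"
    and "\<forall>v\<in>vertices G. emeasure P (cyl G v) > 0"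
    and "\<forall>l\<in>edges G.
           absolutely_continuous (restrict_space P (cyl G (src G l)))
             (comp_measure P (cyl G (src G l)) (prefix G l)) \<and>
           (AE x in restrict_space P (cyl G (src G l)).
              RN_deriv (restrict_space P (cyl G (src G l)))
                (comp_measure P (cyl G (src G l)) (prefix G l)) x > 0)"
  shows "Lambda_sbfs G P (\<lambda>l. cyl G (src G l)) (prefix G) shift"
proof -
  interpret kgraph_path_space G P
    using kgraph.intro[OF assms(1)] prob_space_imp_sigma_finite[OF assms(5)]
      kgraph_path_space_axioms.intro[OF assms(6,7) assms(9)[rule_format]]
    by (rule kgraph_path_space.intro)
  have "null_preserving P (cyl G (src G e)) (prefix G e)" if "e \<in> edges G" for e
    by (rule iffD1[OF prefix_RN_deriv_pos_iff[OF edge_mor[OF that]] assms(11)[rule_format, OF that]])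
  then have null: "null_preserving P (cyl G (src G l)) (prefix G l)" if "l \<in> mor G" for l
    using null_preserving_prefix that by blast
  have "sbfs P (paths_of_deg G m) (\<lambda>l. cyl G (src G l)) (prefix G)" for m
    using assms(2,8) by (intro sbfs_prefix null) (auto simp: finite_kgraph_def)
  moreover have "(\<forall>x\<in>cyl G (src G v). prefix G v x = x) \<and> emeasure P (cyl G (src G v)) > 0"
    if "v \<in> vertices G" for v
    using prefix_vertex src_vertex assms(10) that by simp
  moreover have "(AE x in P. x \<in> prefix G n ` cyl G (src G n) \<longrightarrow> x \<in> cyl G (src G l)) \<and>
      (AE x in P. x \<in> cyl G (src G n) \<longrightarrow> prefix G l (prefix G n x) = prefix G (cmp G l n) x)"
    if l: "l \<in> mor G" and n: "n \<in> mor G" and ln: "src G l = rng G n" for l n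
  proof -
    have "prefix G n ` cyl G (src G n) \<subseteq> cyl G (src G l)"
      using prefix_image_cyl[OF n] cyl_subset_cyl_rng[OF n] ln by simp
    then show ?thesis using prefix_prefix[OF l n ln] by (intro conjI AE_I2 impI) auto
  qed
  ultimately show ?thesis
    unfolding Lambda_sbfs_def using coding_map_shift shift_shift by blast
qed

end
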